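(* Let $(Q_{n,\omega},\omega,Q,\mu_n,(a,b))$ be one of the three classical families below, and let $n\geq 1$. Let $t_1<\dots<t_n$ be the zeros of $Q_{n,\omega}$ in $(a,b)$. Then $$\int_a^b |Q_{n,\omega}(t)|\,\omega(t)\,dt = 2\,\frac{\mu_{n-1}}{|\mu_n|}\sum_{j=1}^{n}(-1)^{j+1}\,\omega(t_j)\,Q(t_j)\,Q_{n-1,\omega Q}(t_j).$$
   Context: The classical orthogonal polynomials are given by Rodrigues' formula $Q_{n,\omega}(t)=\frac{1}{\omega(t)\mu_n}\frac{d^n}{dt^n}(\omega Q^n)(t)$, $t\in(a,b)$, for the following data: (Laguerre) $Q_{n,\omega}=L_n^{(\alpha)}$, $\mu_n=n!$, $\omega(t)=t^{\alpha}e^{-t}$, $Q(t)=t$, $(a,b)=(0,\infty)$, with $\alpha>-1$; (Hermite) $Q_{n,\omega}=H_n$, $\mu_n=(-1)^n$, $\omega(t)=e^{-t^2}$, $Q(t)=1$, $(a,b)=(-\infty,\infty)$; (Jacobi) $Q_{n,\omega}=P_n^{(\alpha,\beta)}$, $\mu_n=(-1)^n2^nn!$, $\omega(t)=(1-t)^{\alpha}(1+t)^{\beta}$, $Q(t)=1-t^2$, $(a,b)=(-1,1)$, with $\alpha,\beta>-1$. Correspondingly, $Q_{n-1,\omega Q}$ denotes the function given by the same Rodrigues formula with weight $\omega Q$ in place of $\omega$, i.e. $Q_{n-1,\omega Q}(t)=\frac{1}{\omega(t)Q(t)\mu_{n-1}}\frac{d^{n-1}}{dt^{n-1}}(\omega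 Q\cdot Q^{n-1})(t)$. The zeros of $Q_{n,\omega}$ are real, simple and lie in $(a,b)$. *)

theory Defs
  imports "HOL-Analysis.Analysis"
begin

datatype cfamily = Laguerre real | Hermite | Jacobi real real

fun cf_valid :: "cfamily \<Rightarrow> bool" where
  "cf_valid (Laguerre \<alpha>) = (\<alpha> > -1)"
| "cf_valid Hermite = True"
| "cf_valid (Jacobi \<alpha> \<beta>) = (\<alpha> > -1 \<and> \<beta> > -1)"

fun cf_weight :: "cfamily \<Rightarrow> real \<Rightarrow> real" where
  "cf_weight (Laguerre \<alpha>) t = t powr \<alpha> * exp (- t)"
| "cf_weight Hermite t = exp (- (t ^ 2))"
| "cf_weight (Jacobi \<alpha> \<beta>) t = (1 - t) powr \<alpha> * (1 + t) powr \<beta>"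

fun cf_Q :: "cfamily \<Rightarrow> real \<Rightarrow> real" where
  "cf_Q (Laguerre \<alpha>) t = t"
| "cf_Q Hermite t = 1"
| "cf_Q (Jacobi \<alpha> \<beta>) t = 1 - t ^ 2"

fun cf_mu :: "cfamily \<Rightarrow> nat \<Rightarrow> real" where
  "cf_mu (Laguerre \<alpha>) n = fact n"
| "cf_mu Hermite n = (-1) ^ n"
| "cf_mu (Jacobi \<alpha> \<beta>) n = (-1) ^ n * 2 ^ n * fact n"

fun cf_dom :: "cfamily \<Rightarrow> real set" where
  "cf_dom (Laguerre \<alpha>) = {0<..}"
| "cf_dom Hermite = UNIV"
| "cf_dom (Jacobi \<alpha> \<beta>) = {-1<..<1}"

definition rodrigues :: "(real \<Rightarrow> real) \<Rightarrow> (real \<Rightarrow> real) \<Rightarrow> real \<Rightarrow> nat \<Rightarrow> real \<Rightarrow> real" where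
  "rodrigues w Q mu n t = (deriv ^^ n) (\<lambda>s. w s * Q s ^ n) t / (w t * mu)"

definition cf_poly :: "cfamily \<Rightarrow> nat \<Rightarrow> real \<Rightarrow> real" where
  "cf_poly F n = rodrigues (cf_weight F) (cf_Q F) (cf_mu F n) n"

definition cf_poly_shift :: "cfamily \<Rightarrow> nat \<Rightarrow> real \<Rightarrow> real" where
  "cf_poly_shift F n = rodrigues (\<lambda>s. cf_weight F s * cf_Q F s) (cf_Q F) (cf_mu F n) n"

end

theory Submission
  imports Defs "HOL-Computational_Algebra.Polynomial" "HOL-Real_Asymp.Real_Asymp"
begin

text \<open>
  Write \<open>\<omega>'/\<omega> = \<sigma>/Q\<close> with \<open>deg \<sigma> \<le> 1\<close> and \<open>deg Q \<le> 2\<close>. Then the \<open>k\<close>-th derivative of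
  \<open>\<omega> Q^n\<close> is \<open>\<omega> Q^(n-k) P_k\<close> for a polynomial \<open>P_k\<close> of degree \<open>k\<close>, so
  \<open>\<mu>_n \<omega> Q_{n,\<omega>} = \<omega> P_n\<close> is the derivative of \<open>H = \<mu>_{n-1} \<omega> Q Q_{n-1,\<omega>Q} = \<omega> Q P_{n-1}\<close>,
  and \<open>H\<close> vanishes at both ends of \<open>(a,b)\<close>. The leading coefficient of \<open>P_n\<close> has sign \<open>(-1)^n\<close>,
  so \<open>(-1)^k P_n > 0\<close> on the \<open>k\<close>-th gap between consecutive zeros, and there the integral of
  \<open>|\<omega> P_n|\<close> is \<open>(-1)^k\<close> times the increment of \<open>H\<close> across the gap. Summing over the gaps, each
  \<open>H(t_j)\<close> appears twice, with sign \<open>(-1)^(j+1)\<close>.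
\<close>

section \<open>Polynomials with simple real zeros\<close>

lemma poly_eq_lead_coeff_prod_roots:
  fixes p :: "'a::idom poly"
  assumes "finite S" "card S = degree p" "p \<noteq> 0" "\<And>x. x \<in> S \<Longrightarrow> poly p x = 0"
  shows "poly p t = lead_coeff p * (\<Prod>x\<in>S. t - x)"
  using assms
proof (induction S arbitrary: p rule: finite_induct)
  case empty
  then obtain c where "p = [:c:]" by (metis card.empty degree_eq_zeroE)
  then show ?case by simp
next
  case (insert x S)
  obtain r where r: "p = [:-x, 1:] * r"
    using insert.prems(3) poly_eq_0_iff_dvd by (metis dvdE insertI1)
  have "r \<noteq> 0" using insert.prems(2) r by auto
  then have "degree p = Suc (degree r)" unfolding r by (subst degree_mult_eq) auto
  moreover have "poly r y = 0" if "y \<in> S" for y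
    using insert.prems(3)[of y] insert.hyps(2) that r by auto
  ultimately have "poly r t = lead_coeff r * (\<Prod>x\<in>S. t - x)"
    using insert.IH \<open>r \<noteq> 0\<close> insert.prems(1) insert.hyps by simp
  moreover have "lead_coeff p = lead_coeff r" unfolding r lead_coeff_mult by simp
  moreover have "poly p t = (t - x) * poly r t" unfolding r by (simp add: algebra_simps)
  ultimately show ?case using insert.hyps by simp
qed

lemma prod_diff_sign_between:
  fixes ts :: "nat \<Rightarrow> real"
  assumes "k \<le> n" "\<And>j. j \<in> {1..k} \<Longrightarrow> ts j < t" "\<And>j. j \<in> {Suc k..n} \<Longrightarrow> t < ts j"
  shows "(-1) ^ (n - k) * (\<Prod>j=1..n. t - ts j) > 0"
proof -
  have "{1..n} = {1..k} \<union> {Suc k..n}" using assms(1) by auto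
  then have split: "(\<Prod>j=1..n. t - ts j) = (\<Prod>j=1..k. t - ts j) * (\<Prod>j=Suc k..n. t - ts j)"
    by (simp add: prod.union_disjoint)
  have flip: "(\<Prod>j=Suc k..n. t - ts j) = (-1) ^ (n - k) * (\<Prod>j=Suc k..n. ts j - t)"
    using prod_uminus[of "\<lambda>j. ts j - t" "{Suc k..n}"] by simp
  have "(\<Prod>j=1..k. t - ts j) > 0" "(\<Prod>j=Suc k..n. ts j - t) > 0"
    using assms(2,3) by (auto intro!: prod_pos)
  moreover have "(-1::real) ^ (n - k) * (-1) ^ (n - k) = 1"
    by (simp flip: power_add)
  ultimately show ?thesis
    unfolding split flip by (metis (no_types, lifting) mult.assoc mult.left_commute mult_1 mult_pos_pos)
qed

lemma poly_sign_between_roots: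
  fixes p :: "real poly" and ts :: "nat \<Rightarrow> real"
  assumes deg: "degree p = n" and lead: "(-1) ^ n * lead_coeff p > 0"
    and mono: "strict_mono_on {1..n} ts" and roots: "\<And>j. j \<in> {1..n} \<Longrightarrow> poly p (ts j) = 0"
    and "k \<le> n" "\<And>j. j \<in> {1..k} \<Longrightarrow> ts j < t" "\<And>j. j \<in> {Suc k..n} \<Longrightarrow> t < ts j"
  shows "(-1) ^ k * poly p t > 0"
proof -
  have inj: "inj_on ts {1..n}"
    using mono by (rule strict_mono_on_imp_inj_on)
  have "poly p t = lead_coeff p * (\<Prod>x\<in>ts ` {1..n}. t - x)"
    using roots inj deg lead by (intro poly_eq_lead_coeff_prod_roots) (auto simp: card_image)
  also have "\<dots> = lead_coeff p * (\<Prod>j=1..n. t - ts j)"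
    using prod.reindex[OF inj, of "\<lambda>x. t - x"] by (simp only: comp_def)
  finally have factor: "poly p t = lead_coeff p * (\<Prod>j=1..n. t - ts j)" .
  have "n + (n - k) = k + 2 * (n - k)"
    using \<open>k \<le> n\<close> by simp
  then have "(-1::real) ^ n * (-1) ^ (n - k) = (-1) ^ (k + 2 * (n - k))"
    by (simp only: power_add[symmetric])
  then have "(-1::real) ^ k = (-1) ^ n * (-1) ^ (n - k)"
    by (simp add: power_add power_mult)
  then have "(-1) ^ k * poly p t = ((-1) ^ n * lead_coeff p) * ((-1) ^ (n - k) * (\<Prod>j=1..n. t - ts j))"
    by (simp add: factor mult_ac)
  moreover have "(-1) ^ (n - k) * (\<Prod>j=1..n. t - ts j) > 0"
    using assms(5-7) by (rule prod_diff_sign_between)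
  ultimately show ?thesis
    using lead by simp
qed

section \<open>Integrals over subdivided intervals\<close>

lemma sum_alternating_differences:
  fixes h :: "nat \<Rightarrow> 'a::comm_ring_1"
  shows "(\<Sum>k\<le>n. (-1) ^ k * (h (Suc k) - h k))
       = (-1) ^ n * h (Suc n) - h 0 + 2 * (\<Sum>j=1..n. (-1) ^ (j + 1) * h j)"
  by (induction n) (simp_all add: algebra_simps)

lemma set_integral_einterval_split:
  fixes f :: "real \<Rightarrow> 'a::{banach, second_countable_topology}"
  assumes "a < ereal c" "ereal c < b"
    and "set_integrable lborel (einterval a c) f" "set_integrable lborel (einterval c b) f"
  shows "set_integrable lborel (einterval a b) f \<and>
         (LBINT t:einterval a b. f t) = (LBINT t:einterval a c. f t) + (LBINT t:einterval c b. f t)"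
proof -
  let ?U = "einterval a c \<union> einterval c b"
  have diff: "(einterval a b - ?U) \<union> (?U - einterval a b) \<subseteq> {c}"
    using assms(1,2) by (auto simp: einterval_def intro: less_trans[of _ "ereal c"])
  have "set_integrable lborel ?U f"
    using assms(3,4) by (intro set_integrable_Un) auto
  moreover have "set_integrable lborel (einterval a b) f \<longleftrightarrow> set_integrable lborel ?U f"
    by (rule set_integrable_discrete_difference[OF _ diff]) auto
  moreover have "(LBINT t:einterval a b. f t) = (LBINT t:?U. f t)"
    by (rule set_integral_discrete_difference[OF _ diff]) auto
  moreover have "(LBINT t:?U. f t) = (LBINT t:einterval a c. f t) + (LBINT t:einterval c b. f t)"
    using assms(3,4) by (intro set_integral_Un) (auto simp: einterval_def)
  ultimately show ?thesis by simp
qed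

lemma set_integral_einterval_partition:
  fixes e :: "nat \<Rightarrow> ereal" and f :: "real \<Rightarrow> 'a::{banach, second_countable_topology}"
  assumes "strict_mono_on {..Suc n} e"
    and "\<And>k. k \<le> n \<Longrightarrow> set_integrable lborel (einterval (e k) (e (Suc k))) f"
  shows "set_integrable lborel (einterval (e 0) (e (Suc n))) f \<and>
         (LBINT t:einterval (e 0) (e (Suc n)). f t) = (\<Sum>k\<le>n. LBINT t:einterval (e k) (e (Suc k)). f t)"
  using assms
proof (induction n)
  case 0
  then show ?case by simp
next
  case (Suc n)
  have "strict_mono_on {..Suc n} e"
    using Suc.prems(1) by (rule monotone_on_subset) auto
  then have IH: "set_integrable lborel (einterval (e 0) (e (Suc n))) f \<and>
      (LBINT t:einterval (e 0) (e (Suc n)). f t) = (\<Sum>k\<le>n. LBINT t:einterval (e k) (e (Suc k)). f t)"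
    using Suc.IH Suc.prems(2) by simp
  have "e 0 < e (Suc n)" "e (Suc n) < e (Suc (Suc n))"
    using Suc.prems(1) by (auto simp: strict_mono_on_def)
  moreover from this obtain c where "e (Suc n) = ereal c"
    by (cases "e (Suc n)") auto
  ultimately show ?case
    using set_integral_einterval_split[of "e 0" c "e (Suc (Suc n))" f] IH Suc.prems(2)[of "Suc n"]
    by simp
qed

lemma set_integral_abs_eq_FTC:
  fixes f H :: "real \<Rightarrow> real" and a b :: ereal
  assumes "a < b" "\<bar>c\<bar> = 1"
    and deriv: "\<And>t. t \<in> einterval a b \<Longrightarrow> (H has_real_derivative f t) (at t)"
    and cont: "\<And>t. t \<in> einterval a b \<Longrightarrow> isCont f t"
    and sign: "\<And>t. t \<in> einterval a b \<Longrightarrow> 0 \<le> c * f t"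
    and lim_a: "((H \<circ> real_of_ereal) \<longlongrightarrow> A) (at_right a)"
    and lim_b: "((H \<circ> real_of_ereal) \<longlongrightarrow> B) (at_left b)"
  shows "set_integrable lborel (einterval a b) (\<lambda>t. \<bar>f t\<bar>) \<and>
         (LBINT t:einterval a b. \<bar>f t\<bar>) = c * (B - A)"
proof -
  have abs_eq: "\<bar>f t\<bar> = c * f t" if "t \<in> einterval a b" for t
    using sign[OF that] assms(2) by (metis abs_mult abs_of_nonneg mult_1)
  have D: "((\<lambda>t. c * H t) has_real_derivative c * f t) (at t)" if "a < ereal t" "ereal t < b" for t
    using deriv[of t] that by (auto simp: einterval_iff intro!: derivative_eq_intros)
  have C: "isCont (\<lambda>t. c * f t) t" if "a < ereal t" "ereal t < b" for t
    using cont[of t] that by (auto simp: einterval_iff)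
  have N: "AE t in lborel. a < ereal t \<longrightarrow> ereal t < b \<longrightarrow> 0 \<le> c * f t"
    using sign by (auto simp: einterval_iff)
  have A: "(((\<lambda>t. c * H t) \<circ> real_of_ereal) \<longlongrightarrow> c * A) (at_right a)"
    using tendsto_mult_left[OF lim_a, of c] by (simp add: o_def)
  have B: "(((\<lambda>t. c * H t) \<circ> real_of_ereal) \<longlongrightarrow> c * B) (at_left b)"
    using tendsto_mult_left[OF lim_b, of c] by (simp add: o_def)
  have FTC: "set_integrable lborel (einterval a b) (\<lambda>t. c * f t)"
    "(LBINT t=a..b. c * f t) = c * B - c * A"
    using interval_integral_FTC_nonneg[OF \<open>a < b\<close> D C N A B] by auto
  have "set_integrable lborel (einterval a b) (\<lambda>t. \<bar>f t\<bar>)"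
    using FTC(1) set_integrable_cong[of lborel lborel "einterval a b" "einterval a b" "\<lambda>t. \<bar>f t\<bar>"] abs_eq
    by simp
  moreover have "(LBINT t:einterval a b. \<bar>f t\<bar>) = (LBINT t:einterval a b. c * f t)"
    by (rule set_lebesgue_integral_cong) (auto simp: abs_eq)
  ultimately show ?thesis
    using FTC(2) \<open>a < b\<close> by (simp add: interval_lebesgue_integral_def right_diff_distrib less_imp_le)
qed

definition subdivision :: "ereal \<Rightarrow> ereal \<Rightarrow> (nat \<Rightarrow> real) \<Rightarrow> nat \<Rightarrow> nat \<Rightarrow> ereal" where
  "subdivision a b ts n k = (if k = 0 then a else if k \<le> n then ereal (ts k) else b)"

lemma strict_mono_on_subdivision:
  assumes "a < b" "strict_mono_on {1..n} ts" "ts ` {1..n} \<subseteq> einterval a b"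
  shows "strict_mono_on {..Suc n} (subdivision a b ts n)"
proof (rule strict_mono_onI)
  fix i j :: nat assume "i \<in> {..Suc n}" "j \<in> {..Suc n}" "i < j"
  then consider "i = 0" "j \<le> n" | "i = 0" "j = Suc n" | "0 < i" "j \<le> n" | "0 < i" "j = Suc n"
    by fastforce
  then show "subdivision a b ts n i < subdivision a b ts n j"
  proof cases
    case 1
    then have "ts j \<in> einterval a b" using assms(3) \<open>i < j\<close> by auto
    then show ?thesis using 1 \<open>i < j\<close> by (simp add: subdivision_def einterval_def)
  next
    case 2
    then show ?thesis using assms(1) by (simp add: subdivision_def)
  next
    case 3
    then show ?thesis using assms(2) \<open>i < j\<close> by (auto simp: subdivision_def strict_mono_on_def)
  next
    case 4
    then have "ts i \<in> einterval a b" using assms(3) \<open>i < j\<close> by auto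
    then show ?thesis using 4 \<open>i < j\<close> by (simp add: subdivision_def einterval_def)
  qed
qed

lemma mem_subdivision_gap:
  assumes mono: "strict_mono_on {..Suc n} (subdivision a b ts n)" and "k \<le> n"
    and "t \<in> einterval (subdivision a b ts n k) (subdivision a b ts n (Suc k))"
  shows "t \<in> einterval a b" "\<And>j. j \<in> {1..k} \<Longrightarrow> ts j < t" "\<And>j. j \<in> {Suc k..n} \<Longrightarrow> t < ts j"
proof -
  let ?e = "subdivision a b ts n"
  have lo: "?e k < ereal t" and hi: "ereal t < ?e (Suc k)"
    using assms(3) by (simp_all add: einterval_iff)
  have "?e 0 \<le> ?e k" "?e (Suc k) \<le> ?e (Suc n)"
    using strict_mono_on_leD[OF mono] \<open>k \<le> n\<close> by simp_all
  then have "a \<le> ?e k" "?e (Suc k) \<le> b"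
    by (simp_all add: subdivision_def)
  then show "t \<in> einterval a b"
    using order.strict_trans1[OF _ lo] order.strict_trans2[OF hi] by (simp add: einterval_iff)
  show "ts j < t" if "j \<in> {1..k}" for j
  proof -
    have "?e j \<le> ?e k" using strict_mono_on_leD[OF mono, of j k] that \<open>k \<le> n\<close> by simp
    then show ?thesis using lo that \<open>k \<le> n\<close> by (simp add: subdivision_def)
  qed
  show "t < ts j" if "j \<in> {Suc k..n}" for j
  proof -
    have "?e (Suc k) \<le> ?e j" using strict_mono_on_leD[OF mono, of "Suc k" j] that by simp
    then show ?thesis using hi that by (simp add: subdivision_def)
  qed
qed

lemma set_integral_abs_poly_weight_alternating:
  fixes a b :: ereal and p :: "real poly" and w H :: "real \<Rightarrow> real" and ts :: "nat \<Rightarrow> real"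
  assumes "a < b" and deg: "degree p = n" and lead: "(-1) ^ n * lead_coeff p > 0"
    and mono: "strict_mono_on {1..n} ts"
    and zeros: "{t \<in> einterval a b. poly p t = 0} = ts ` {1..n}"
    and w_pos: "\<And>t. t \<in> einterval a b \<Longrightarrow> w t > 0"
    and w_cont: "\<And>t. t \<in> einterval a b \<Longrightarrow> isCont w t"
    and H_deriv: "\<And>t. t \<in> einterval a b \<Longrightarrow> (H has_real_derivative w t * poly p t) (at t)"
    and H_a: "((H \<circ> real_of_ereal) \<longlongrightarrow> 0) (at_right a)"
    and H_b: "((H \<circ> real_of_ereal) \<longlongrightarrow> 0) (at_left b)"
  shows "(LBINT t:einterval a b. \<bar>poly p t\<bar> * w t) = 2 * (\<Sum>j=1..n. (-1) ^ (j + 1) * H (ts j))"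
proof -
  let ?e = "subdivision a b ts n"
  have ts_in: "ts j \<in> einterval a b" if "j \<in> {1..n}" for j
    using zeros that by blast
  have e_mono: "strict_mono_on {..Suc n} ?e"
    using \<open>a < b\<close> mono ts_in by (intro strict_mono_on_subdivision) auto
  note in_gap = mem_subdivision_gap[OF e_mono]
  define h where "h k = (if k = 0 \<or> k = Suc n then 0 else H (ts k))" for k
  have H_cont: "isCont H (ts j)" if "j \<in> {1..n}" for j
    using H_deriv[OF ts_in[OF that]] by (rule DERIV_isCont)
  have lim_right: "((H \<circ> real_of_ereal) \<longlongrightarrow> h k) (at_right (?e k))" if "k \<le> n" for k
    using H_a H_cont[of k] that
    by (auto simp: subdivision_def h_def ereal_tendsto_simps1 isCont_def intro: tendsto_mono[OF at_le])
  have lim_left: "((H \<circ> real_of_ereal) \<longlongrightarrow> h (Suc k)) (at_left (?e (Suc k)))" if "k \<le> n" for k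
    using H_b H_cont[of "Suc k"] that
    by (auto simp: subdivision_def h_def ereal_tendsto_simps1 isCont_def intro: tendsto_mono[OF at_le])
  have gap: "set_integrable lborel (einterval (?e k) (?e (Suc k))) (\<lambda>t. \<bar>w t * poly p t\<bar>) \<and>
      (LBINT t:einterval (?e k) (?e (Suc k)). \<bar>w t * poly p t\<bar>) = (-1) ^ k * (h (Suc k) - h k)"
    if "k \<le> n" for k
  proof (rule set_integral_abs_eq_FTC)
    show "?e k < ?e (Suc k)"
      using e_mono that by (auto simp: strict_mono_on_def)
    show "(H has_real_derivative w t * poly p t) (at t)" "isCont (\<lambda>t. w t * poly p t) t"
      if "t \<in> einterval (?e k) (?e (Suc k))" for t
      using in_gap(1)[OF \<open>k \<le> n\<close> that] H_deriv w_cont by (auto intro!: continuous_intros)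
    show "0 \<le> (-1) ^ k * (w t * poly p t)" if "t \<in> einterval (?e k) (?e (Suc k))" for t
    proof -
      have "(-1) ^ k * poly p t > 0"
        using deg lead mono zeros \<open>k \<le> n\<close> in_gap[OF \<open>k \<le> n\<close> that]
        by (intro poly_sign_between_roots) auto
      moreover have "w t > 0"
        using w_pos in_gap(1)[OF \<open>k \<le> n\<close> that] .
      ultimately show ?thesis
        by (simp add: mult.left_commute)
    qed
  qed (use lim_right lim_left that in auto)
  have "(LBINT t:einterval a b. \<bar>poly p t\<bar> * w t) = (LBINT t:einterval (?e 0) (?e (Suc n)). \<bar>w t * poly p t\<bar>)"
    using w_pos by (simp add: subdivision_def, intro set_lebesgue_integral_cong) (auto simp: abs_mult less_imp_le)
  also have "\<dots> = (\<Sum>k\<le>n. LBINT t:einterval (?e k) (?e (Suc k)). \<bar>w t * poly p t\<bar>)"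
    using set_integral_einterval_partition[OF e_mono] gap by blast
  also have "\<dots> = (\<Sum>k\<le>n. (-1) ^ k * (h (Suc k) - h k))"
    using gap by simp
  also have "\<dots> = 2 * (\<Sum>j=1..n. (-1) ^ (j + 1) * h j)"
    unfolding sum_alternating_differences by (simp add: h_def)
  also have "\<dots> = 2 * (\<Sum>j=1..n. (-1) ^ (j + 1) * H (ts j))"
    by (simp add: h_def)
  finally show ?thesis .
qed

section \<open>Rodrigues polynomials\<close>

text \<open>If \<open>w' = w \<sigma> / Q\<close>, the \<open>k\<close>-th derivative of \<open>w Q^n\<close> is \<open>w Q^(n-k)\<close> times
  \<open>rodrigues_poly Q \<sigma> n k\<close> (lemma \<open>higher_deriv_weight_Q_power\<close>).\<close>

fun rodrigues_poly :: "real poly \<Rightarrow> real poly \<Rightarrow> nat \<Rightarrow> nat \<Rightarrow> real poly" where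
  "rodrigues_poly Q \<sigma> n 0 = 1"
| "rodrigues_poly Q \<sigma> n (Suc k) =
     (\<sigma> + smult (of_nat (n - k)) (pderiv Q)) * rodrigues_poly Q \<sigma> n k + Q * pderiv (rodrigues_poly Q \<sigma> n k)"

lemma has_real_derivative_weight_Q_power_poly:
  fixes w :: "real \<Rightarrow> real"
  assumes w_deriv: "(w has_real_derivative w t * poly \<sigma> t / poly Q t) (at t)" and "poly Q t \<noteq> 0"
  shows "((\<lambda>s. w s * poly Q s ^ Suc m * poly p s) has_real_derivative
          w t * poly Q t ^ m * poly ((\<sigma> + smult (of_nat (Suc m)) (pderiv Q)) * p + Q * pderiv p) t) (at t)"
  by (rule DERIV_cong[OF DERIV_mult[OF DERIV_mult[OF w_deriv DERIV_power_Suc[OF poly_DERIV]] poly_DERIV]])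
     (use assms(2) in \<open>simp add: field_simps\<close>)

lemma higher_deriv_weight_Q_power:
  fixes w :: "real \<Rightarrow> real"
  assumes "open S"
    and w_deriv: "\<And>t. t \<in> S \<Longrightarrow> (w has_real_derivative w t * poly \<sigma> t / poly Q t) (at t)"
    and Q_nz: "\<And>t. t \<in> S \<Longrightarrow> poly Q t \<noteq> 0"
  shows "k \<le> n \<Longrightarrow> t \<in> S \<Longrightarrow>
    (deriv ^^ k) (\<lambda>s. w s * poly Q s ^ n) t = w t * poly Q t ^ (n - k) * poly (rodrigues_poly Q \<sigma> n k) t"
proof (induction k arbitrary: t)
  case 0
  then show ?case by simp
next
  case (Suc k)
  define m where "m = n - Suc k"
  have "n - k = Suc m" using Suc.prems(1) by (simp add: m_def)
  then have "((\<lambda>s. w s * poly Q s ^ (n - k) * poly (rodrigues_poly Q \<sigma> n k) s) has_real_derivative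
      w t * poly Q t ^ m * poly (rodrigues_poly Q \<sigma> n (Suc k)) t) (at t)"
    using has_real_derivative_weight_Q_power_poly[OF w_deriv Q_nz, OF Suc.prems(2) Suc.prems(2)] by simp
  then have "((deriv ^^ k) (\<lambda>s. w s * poly Q s ^ n) has_real_derivative
      w t * poly Q t ^ m * poly (rodrigues_poly Q \<sigma> n (Suc k)) t) (at t)"
    by (rule has_field_derivative_transform_within_open[OF _ \<open>open S\<close> Suc.prems(2)])
       (use Suc.IH Suc.prems(1) in simp)
  then show ?case
    by (simp add: DERIV_imp_deriv m_def)
qed

lemma coeff_mult_at_degree_bounds:
  fixes p q :: "'a::comm_semiring_0 poly"
  assumes "degree p \<le> i" "degree q \<le> j"
  shows "coeff (p * q) (i + j) = coeff p i * coeff q j"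
proof -
  have "coeff (p * q) (i + j) = (\<Sum>l\<le>i + j. coeff p l * coeff q (i + j - l))"
    by (rule coeff_mult)
  also have "\<dots> = (\<Sum>l\<le>i + j. if l = i then coeff p i * coeff q j else 0)"
  proof (intro sum.cong refl)
    fix l assume "l \<in> {..i + j}"
    show "coeff p l * coeff q (i + j - l) = (if l = i then coeff p i * coeff q j else 0)"
      by (cases l i rule: linorder_cases) (use assms in \<open>auto simp: coeff_eq_0\<close>)
  qed
  finally show ?thesis by simp
qed

lemma rodrigues_poly_degree:
  assumes "degree \<sigma> \<le> 1" and "degree Q \<le> 2"
    and lead: "\<And>k. k < n \<Longrightarrow> coeff \<sigma> 1 + real (2 * n - k) * coeff Q 2 < 0"
  shows "k \<le> n \<Longrightarrow> degree (rodrigues_poly Q \<sigma> n k) = k \<and> (-1) ^ k * lead_coeff (rodrigues_poly Q \<sigma> n k) > 0"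
proof (induction k)
  case 0
  then show ?case by simp
next
  case (Suc k)
  let ?p = "rodrigues_poly Q \<sigma> n k"
  let ?A = "\<sigma> + smult (of_nat (n - k)) (pderiv Q)"
  have "k < n" using Suc.prems by simp
  then have deg_p: "degree ?p = k" and sign_p: "(-1) ^ k * coeff ?p k > 0"
    using Suc.IH by auto
  have deg_Q': "degree (pderiv Q) \<le> 1"
    using \<open>degree Q \<le> 2\<close> degree_pderiv[of Q] by linarith
  have deg_A: "degree ?A \<le> 1"
    using \<open>degree \<sigma> \<le> 1\<close> deg_Q' degree_smult_le[of "of_nat (n - k)" "pderiv Q"]
    by (intro degree_add_le) auto
  have deg_p': "degree (pderiv ?p) \<le> k - 1"
    using deg_p degree_pderiv[of ?p] by simp
  have coeff_Q_p': "coeff (Q * pderiv ?p) (Suc k) = coeff Q 2 * (real k * coeff ?p k)"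
  proof (cases k)
    case 0
    then show ?thesis using deg_p by (simp add: pderiv_eq_0_iff)
  next
    case (Suc j)
    then have "coeff (Q * pderiv ?p) (2 + j) = coeff Q 2 * coeff (pderiv ?p) j"
      using coeff_mult_at_degree_bounds[OF \<open>degree Q \<le> 2\<close> deg_p'] by simp
    then show ?thesis using Suc by (simp add: coeff_pderiv)
  qed
  have deg_Q_p': "degree (Q * pderiv ?p) \<le> Suc k"
    using degree_mult_le[of Q "pderiv ?p"] \<open>degree Q \<le> 2\<close> deg_p' by (cases k) auto
  have "coeff (rodrigues_poly Q \<sigma> n (Suc k)) (Suc k)
      = (coeff \<sigma> 1 + real (2 * n - k) * coeff Q 2) * coeff ?p k"
    using coeff_mult_at_degree_bounds[OF deg_A, of ?p k] deg_p coeff_Q_p' \<open>k < n\<close>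
    by (simp add: coeff_pderiv numeral_2_eq_2 algebra_simps of_nat_diff)
  then have "(-1) ^ Suc k * coeff (rodrigues_poly Q \<sigma> n (Suc k)) (Suc k)
      = - (coeff \<sigma> 1 + real (2 * n - k) * coeff Q 2) * ((-1) ^ k * coeff ?p k)"
    by (simp only: power_Suc) (simp add: algebra_simps)
  moreover have "- (coeff \<sigma> 1 + real (2 * n - k) * coeff Q 2) > 0"
    using lead[OF \<open>k < n\<close>] by linarith
  ultimately have pos: "(-1) ^ Suc k * coeff (rodrigues_poly Q \<sigma> n (Suc k)) (Suc k) > 0"
    using sign_p by simp
  have "degree (rodrigues_poly Q \<sigma> n (Suc k)) \<le> Suc k"
    using degree_mult_le[of ?A ?p] deg_A deg_p deg_Q_p' by (auto intro!: degree_add_le)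
  moreover have "Suc k \<le> degree (rodrigues_poly Q \<sigma> n (Suc k))"
    using pos by (intro le_degree) auto
  ultimately have "degree (rodrigues_poly Q \<sigma> n (Suc k)) = Suc k"
    by (rule antisym)
  with pos show ?case
    by simp
qed

lemma set_integral_abs_rodrigues:
  fixes a b :: ereal and w :: "real \<Rightarrow> real" and Q \<sigma> :: "real poly" and ts :: "nat \<Rightarrow> real"
  assumes "a < b" "n \<ge> 1" "c \<noteq> 0" "d \<noteq> 0"
    and mono: "strict_mono_on {1..n} ts"
    and zeros: "{t \<in> einterval a b. rodrigues w (poly Q) c n t = 0} = ts ` {1..n}"
    and w_deriv: "\<And>t. t \<in> einterval a b \<Longrightarrow> (w has_real_derivative w t * poly \<sigma> t / poly Q t) (at t)"
    and Q_nz: "\<And>t. t \<in> einterval a b \<Longrightarrow> poly Q t \<noteq> 0"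
    and w_pos: "\<And>t. t \<in> einterval a b \<Longrightarrow> w t > 0"
    and w_cont: "\<And>t. t \<in> einterval a b \<Longrightarrow> isCont w t"
    and deg: "degree \<sigma> \<le> 1" "degree Q \<le> 2"
    and lead: "\<And>k. k < n \<Longrightarrow> coeff \<sigma> 1 + real (2 * n - k) * coeff Q 2 < 0"
    and lim_a: "\<And>p. (((\<lambda>t. w t * poly Q t * poly p t) \<circ> real_of_ereal) \<longlongrightarrow> 0) (at_right a)"
    and lim_b: "\<And>p. (((\<lambda>t. w t * poly Q t * poly p t) \<circ> real_of_ereal) \<longlongrightarrow> 0) (at_left b)"
  shows "(LBINT t:einterval a b. \<bar>rodrigues w (poly Q) c n t\<bar> * w t)
       = 2 * d / \<bar>c\<bar> * (\<Sum>j=1..n. (-1) ^ (j + 1) * w (ts j) * poly Q (ts j)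
                              * rodrigues (\<lambda>s. w s * poly Q s) (poly Q) d (n - 1) (ts j))"
proof -
  let ?S = "einterval a b"
  let ?P = "rodrigues_poly Q \<sigma> n n" and ?P' = "rodrigues_poly Q \<sigma> n (n - 1)"
  let ?H = "\<lambda>t. w t * poly Q t * poly ?P' t"
  \<comment> \<open>\<open>?H = (deriv ^^ (n - 1)) (\<lambda>s. w s * poly Q s ^ n)\<close> on the interval\<close>
  note higher = higher_deriv_weight_Q_power[OF open_einterval w_deriv Q_nz]
  have rod_P: "rodrigues w (poly Q) c n t = poly ?P t / c" if "t \<in> ?S" for t
    using higher[where k=n and n=n and t=t] that w_pos[OF that] by (simp add: rodrigues_def)
  have rod_P': "rodrigues (\<lambda>s. w s * poly Q s) (poly Q) d (n - 1) t = poly ?P' t / d" if "t \<in> ?S" for t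
  proof -
    have "(\<lambda>s. w s * poly Q s * poly Q s ^ (n - 1)) = (\<lambda>s. w s * poly Q s ^ n)"
      using \<open>n \<ge> 1\<close> by (simp add: mult.assoc flip: power_Suc)
    then show ?thesis
      using higher[where k="n - 1" and n=n and t=t] that w_pos[OF that] Q_nz[OF that] \<open>n \<ge> 1\<close> by (simp add: rodrigues_def)
  qed
  have P_rec: "?P = (\<sigma> + smult (of_nat (Suc 0)) (pderiv Q)) * ?P' + Q * pderiv ?P'"
    using rodrigues_poly.simps(2)[of Q \<sigma> n "n - 1"] \<open>n \<ge> 1\<close> by simp
  have H_deriv: "(?H has_real_derivative w t * poly ?P t) (at t)" if "t \<in> ?S" for t
    using has_real_derivative_weight_Q_power_poly[OF w_deriv[OF that] Q_nz[OF that], of 0 ?P']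
    by (simp only: P_rec) simp
  have "{t \<in> ?S. poly ?P t = 0} = {t \<in> ?S. rodrigues w (poly Q) c n t = 0}"
    using rod_P \<open>c \<noteq> 0\<close> by auto
  then have "{t \<in> ?S. poly ?P t = 0} = ts ` {1..n}"
    using zeros by simp
  moreover have "degree ?P = n \<and> (-1) ^ n * lead_coeff ?P > 0"
    using rodrigues_poly_degree[OF deg lead, of n] by blast
  ultimately have integral_P: "(LBINT t:?S. \<bar>poly ?P t\<bar> * w t) = 2 * (\<Sum>j=1..n. (-1) ^ (j + 1) * ?H (ts j))"
    using set_integral_abs_poly_weight_alternating[OF \<open>a < b\<close> _ _ mono _ w_pos w_cont H_deriv lim_a lim_b]
    by blast
  have ts_in: "ts j \<in> ?S" if "j \<in> {1..n}" for j
    using zeros that by blast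
  have "(LBINT t:?S. \<bar>rodrigues w (poly Q) c n t\<bar> * w t) = (LBINT t:?S. \<bar>poly ?P t\<bar> * w t / \<bar>c\<bar>)"
    by (rule set_lebesgue_integral_cong) (auto simp: rod_P abs_divide)
  also have "\<dots> = 2 * (\<Sum>j=1..n. (-1) ^ (j + 1) * ?H (ts j)) / \<bar>c\<bar>"
    using integral_P by simp
  also have "(\<Sum>j=1..n. (-1) ^ (j + 1) * ?H (ts j))
      = d * (\<Sum>j=1..n. (-1) ^ (j + 1) * w (ts j) * poly Q (ts j)
                         * rodrigues (\<lambda>s. w s * poly Q s) (poly Q) d (n - 1) (ts j))"
    unfolding sum_distrib_left
  proof (intro sum.cong refl)
    fix j assume "j \<in> {1..n}"
    then show "(-1) ^ (j + 1) * ?H (ts j) = d * ((-1) ^ (j + 1) * w (ts j) * poly Q (ts j)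
        * rodrigues (\<lambda>s. w s * poly Q s) (poly Q) d (n - 1) (ts j))"
      using rod_P'[OF ts_in] \<open>d \<noteq> 0\<close> by simp
  qed
  finally show ?thesis
    by simp
qed

section \<open>The three classical families\<close>

fun cf_lower :: "cfamily \<Rightarrow> ereal" where
  "cf_lower (Laguerre \<alpha>) = ereal 0"
| "cf_lower Hermite = -\<infinity>"
| "cf_lower (Jacobi \<alpha> \<beta>) = ereal (-1)"

fun cf_upper :: "cfamily \<Rightarrow> ereal" where
  "cf_upper (Laguerre \<alpha>) = \<infinity>"
| "cf_upper Hermite = \<infinity>"
| "cf_upper (Jacobi \<alpha> \<beta>) = ereal 1"

fun cf_Q_poly :: "cfamily \<Rightarrow> real poly" where
  "cf_Q_poly (Laguerre \<alpha>) = [:0, 1:]"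
| "cf_Q_poly Hermite = [:1:]"
| "cf_Q_poly (Jacobi \<alpha> \<beta>) = [:1, 0, -1:]"

text \<open>Pearson's equation \<open>\<omega>'/\<omega> = \<sigma>/Q\<close> defines \<open>\<sigma>\<close>.\<close>

fun cf_sigma :: "cfamily \<Rightarrow> real poly" where
  "cf_sigma (Laguerre \<alpha>) = [:\<alpha>, -1:]"
| "cf_sigma Hermite = [:0, -2:]"
| "cf_sigma (Jacobi \<alpha> \<beta>) = [:\<beta> - \<alpha>, -(\<alpha> + \<beta>):]"

lemma cf_dom_einterval: "cf_dom F = einterval (cf_lower F) (cf_upper F)"
  by (cases F) auto

lemma cf_lower_less_upper: "cf_lower F < cf_upper F"
  by (cases F) auto

lemma poly_cf_Q_poly: "poly (cf_Q_poly F) = cf_Q F"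
  by (cases F) (auto simp: fun_eq_iff power2_eq_square)

lemma cf_Q_nonzero: "t \<in> cf_dom F \<Longrightarrow> cf_Q F t \<noteq> 0"
  by (cases F) (auto simp: abs_square_eq_1)

lemma cf_weight_pos: "t \<in> cf_dom F \<Longrightarrow> cf_weight F t > 0"
  by (cases F) auto

lemma isCont_cf_weight: "t \<in> cf_dom F \<Longrightarrow> isCont (cf_weight F) t"
  by (cases F) (auto simp: cf_weight.simps[abs_def] intro!: continuous_intros)

lemma cf_weight_has_real_derivative:
  "t \<in> cf_dom F \<Longrightarrow> (cf_weight F has_real_derivative cf_weight F t * poly (cf_sigma F) t / cf_Q F t) (at t)"
  by (cases F) (auto simp: cf_weight.simps[abs_def] field_simps powr_diff power2_eq_square intro!: derivative_eq_intros)

lemma cf_degrees: "degree (cf_sigma F) \<le> 1" "degree (cf_Q_poly F) \<le> 2"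
  by (cases F; simp)+

text \<open>This is what makes the leading coefficients of the Rodrigues polynomials alternate in sign.\<close>

lemma cf_lead_coeff_condition:
  "cf_valid F \<Longrightarrow> 2 \<le> m \<Longrightarrow> coeff (cf_sigma F) 1 + real m * coeff (cf_Q_poly F) 2 < 0"
  by (cases F) (auto simp: numeral_2_eq_2)

lemma cf_mu_nonzero: "cf_mu F n \<noteq> 0"
  by (cases F) auto

lemma tendsto_poly_mult_zero:
  fixes g :: "real \<Rightarrow> real"
  assumes "\<And>i. ((\<lambda>t. t ^ i * g t) \<longlongrightarrow> 0) F"
  shows "((\<lambda>t. poly p t * g t) \<longlongrightarrow> 0) F"
proof -
  have "((\<lambda>t. \<Sum>i\<le>degree p. coeff p i * (t ^ i * g t)) \<longlongrightarrow> (\<Sum>i\<le>degree p. coeff p i * 0)) F"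
    by (intro tendsto_sum tendsto_mult tendsto_const assms)
  then show ?thesis
    by (simp add: poly_altdef sum_distrib_right mult.assoc)
qed

lemma tendsto_powr_mult_zero:
  fixes g h :: "real \<Rightarrow> real"
  assumes "(g \<longlongrightarrow> 0) F" "\<forall>\<^sub>F t in F. 0 \<le> g t" "\<gamma> > 0" "(h \<longlongrightarrow> c) F"
  shows "((\<lambda>t. g t powr \<gamma> * h t) \<longlongrightarrow> 0) F"
  using tendsto_mult[OF tendsto_zero_powrI[OF assms(1) tendsto_const assms(2,3)] assms(4)] by simp

lemma cf_weight_Q_poly_tendsto_lower:
  assumes "cf_valid F"
  shows "(((\<lambda>t. cf_weight F t * cf_Q F t * poly p t) \<circ> real_of_ereal) \<longlongrightarrow> 0) (at_right (cf_lower F))"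
proof (cases F)
  case (Laguerre \<alpha>)
  have "((\<lambda>t. t powr (\<alpha> + 1) * (exp (- t) * poly p t)) \<longlongrightarrow> 0) (at_right 0)"
    using assms Laguerre eventually_at_right_less[of 0]
    by (intro tendsto_powr_mult_zero[where c = "exp (- 0) * poly p 0"])
       (auto intro!: tendsto_eq_intros tendsto_ident_at elim: eventually_mono)
  moreover have "\<forall>\<^sub>F t in at_right 0. t powr (\<alpha> + 1) * (exp (- t) * poly p t) = cf_weight F t * cf_Q F t * poly p t"
    using eventually_at_right_less[of 0] by eventually_elim (simp add: Laguerre powr_add)
  ultimately show ?thesis
    using Laguerre by (simp add: ereal_tendsto_simps1 tendsto_cong)
next
  case Hermite
  have "((\<lambda>t. poly p t * exp (- (t ^ 2))) \<longlongrightarrow> 0) at_bot"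
    by (rule tendsto_poly_mult_zero) real_asymp
  then show ?thesis
    using Hermite by (simp add: ereal_tendsto_simps1 mult.commute)
next
  case (Jacobi \<alpha> \<beta>)
  have near: "\<forall>\<^sub>F t in at_right (-1). t \<in> {-1<..<1::real}"
    by (rule eventually_at_right_real) simp
  have "((\<lambda>t. (1 + t) powr (\<beta> + 1) * ((1 - t) powr \<alpha> * (1 - t) * poly p t)) \<longlongrightarrow> 0) (at_right (-1))"
    using assms Jacobi near
    by (intro tendsto_powr_mult_zero[where c = "(1 - (-1)) powr \<alpha> * (1 - (-1)) * poly p (-1)"])
       (auto intro!: tendsto_eq_intros tendsto_ident_at elim: eventually_mono)
  moreover have "\<forall>\<^sub>F t in at_right (-1). (1 + t) powr (\<beta> + 1) * ((1 - t) powr \<alpha> * (1 - t) * poly p t)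
      = cf_weight F t * cf_Q F t * poly p t"
    using near by eventually_elim (auto simp: Jacobi powr_add power2_eq_square algebra_simps)
  ultimately show ?thesis
    using Jacobi by (simp add: ereal_tendsto_simps1 tendsto_cong)
qed

lemma cf_weight_Q_poly_tendsto_upper:
  assumes "cf_valid F"
  shows "(((\<lambda>t. cf_weight F t * cf_Q F t * poly p t) \<circ> real_of_ereal) \<longlongrightarrow> 0) (at_left (cf_upper F))"
proof (cases F)
  case (Laguerre \<alpha>)
  have "((\<lambda>t. poly p t * (t powr \<alpha> * t * exp (- t))) \<longlongrightarrow> 0) at_top"
    by (rule tendsto_poly_mult_zero) real_asymp
  then show ?thesis
    using Laguerre by (simp add: ereal_tendsto_simps1 mult_ac)
next
  case Hermite
  have "((\<lambda>t. poly p t * exp (- (t ^ 2))) \<longlongrightarrow> 0) at_top"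
    by (rule tendsto_poly_mult_zero) real_asymp
  then show ?thesis
    using Hermite by (simp add: ereal_tendsto_simps1 mult.commute)
next
  case (Jacobi \<alpha> \<beta>)
  have near: "\<forall>\<^sub>F t in at_left 1. t \<in> {-1<..<1::real}"
    by (rule eventually_at_left_real) simp
  have "((\<lambda>t. (1 - t) powr (\<alpha> + 1) * ((1 + t) powr \<beta> * (1 + t) * poly p t)) \<longlongrightarrow> 0) (at_left 1)"
    using assms Jacobi near
    by (intro tendsto_powr_mult_zero[where c = "(1 + 1) powr \<beta> * (1 + 1) * poly p 1"])
       (auto intro!: tendsto_eq_intros tendsto_ident_at elim: eventually_mono)
  moreover have "\<forall>\<^sub>F t in at_left 1. (1 - t) powr (\<alpha> + 1) * ((1 + t) powr \<beta> * (1 + t) * poly p t)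
      = cf_weight F t * cf_Q F t * poly p t"
    using near by eventually_elim (auto simp: Jacobi powr_add power2_eq_square algebra_simps)
  ultimately show ?thesis
    using Jacobi by (simp add: ereal_tendsto_simps1 tendsto_cong)
qed

theorem theorem1p1:
  fixes F :: cfamily and n :: nat and ts :: "nat \<Rightarrow> real"
  assumes "cf_valid F"
    and "n \<ge> 1"
    and "strict_mono_on {1..n} ts"
    and "{t \<in> cf_dom F. cf_poly F n t = 0} = ts ` {1..n}"
  shows "(LBINT t:cf_dom F. \<bar>cf_poly F n t\<bar> * cf_weight F t)
       = 2 * cf_mu F (n - 1) / \<bar>cf_mu F n\<bar> *
         (\<Sum>j=1..n. (-1) ^ (j + 1) * cf_weight F (ts j) * cf_Q F (ts j)
                      * cf_poly_shift F (n - 1) (ts j))"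
proof -
  have lead: "coeff (cf_sigma F) 1 + real (2 * n - k) * coeff (cf_Q_poly F) 2 < 0" if "k < n" for k
    using that by (intro cf_lead_coeff_condition[OF assms(1)]) linarith
  note cf_unfold = cf_poly_def cf_poly_shift_def cf_dom_einterval poly_cf_Q_poly[symmetric]
  show ?thesis
    using assms(4) unfolding cf_unfold
    by (intro set_integral_abs_rodrigues[OF cf_lower_less_upper assms(2) cf_mu_nonzero cf_mu_nonzero assms(3)])
       (use cf_weight_has_real_derivative cf_Q_nonzero cf_weight_pos isCont_cf_weight cf_degrees lead
          cf_weight_Q_poly_tendsto_lower[OF assms(1)] cf_weight_Q_poly_tendsto_upper[OF assms(1)]
        in \<open>auto simp: cf_unfold\<close>)
qed

end
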